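(* Fix an integer $\alpha\ge2$, an integer $\Delta\ge3$, and parameters $\beta_\mu>\beta_\nu\ge\frac{\Delta-2}{\Delta}$ with $\beta:=(\beta_\nu/\beta_\mu)^\alpha\beta_\mu<\frac{\Delta-2}{\Delta}$. There is a constant $C=C(\Delta,\alpha,\beta_\nu,\beta_\mu)>0$ such that for every $\Delta$-regular graph $G$, letting $\nu$ and $\mu$ be the Gibbs distributions of $(G,\beta_\nu)$ and $(G,\beta_\mu)$ respectively, $$\frac1C\,Z(G,\beta)\ \le\ D_{\chi^\alpha}(\nu\|\mu)\cdot\frac{Z(G,\beta_\nu)^\alpha}{Z(G,\beta_\mu)^{\alpha-1}}\ \le\ C\,Z(G,\beta).$$
   Context: For a graph $G=(V,E)$ and $\gamma>0$, the Ising model $(G,\gamma)$ has Gibbs distribution on $\{-1,+1\}^V$ given by $\pi(\sigma)=\gamma^{m(\sigma)}/Z(G,\gamma)$, where $m(\sigma)=|\{\{u,v\}\in E:\sigma_u=\sigma_v\}|$ and $Z(G,\gamma)=\sum_{\sigma\in\{-1,+1\}^V}\gamma^{m(\sigma)}$ is its partition function. The $\chi^\alpha$-divergence is $D_{\chi^\alpha}(\nu\|\mu)=\sum_\sigma\mu(\sigma)\cdot\frac12\left|\frac{\nu(\sigma)}{\mu(\sigma)}-1\right|^\alpha$. *)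

theory Defs
  imports "HOL-Library.FuncSet" Complex_Main
begin

definition simple_graph :: "nat set \<Rightarrow> nat set set \<Rightarrow> bool" where
  "simple_graph V E \<longleftrightarrow> finite V \<and> (\<forall>e\<in>E. e \<subseteq> V \<and> card e = 2)"

definition regular_graph :: "nat \<Rightarrow> nat set \<Rightarrow> nat set set \<Rightarrow> bool" where
  "regular_graph d V E \<longleftrightarrow> simple_graph V E \<and> (\<forall>v\<in>V. card {e\<in>E. v \<in> e} = d)"

definition spins :: "nat set \<Rightarrow> (nat \<Rightarrow> int) set" where
  "spins V = V \<rightarrow>\<^sub>E {-1, 1}"

definition mono_edges :: "nat set set \<Rightarrow> (nat \<Rightarrow> int) \<Rightarrow> nat" where
  "mono_edges E \<sigma> = card {e\<in>E. \<exists>u v. e = {u, v} \<and> \<sigma> u = \<sigma> v}"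

definition ising_Z :: "nat set \<Rightarrow> nat set set \<Rightarrow> real \<Rightarrow> real" where
  "ising_Z V E \<gamma> = (\<Sum>\<sigma>\<in>spins V. \<gamma> ^ mono_edges E \<sigma>)"

definition gibbs :: "nat set \<Rightarrow> nat set set \<Rightarrow> real \<Rightarrow> (nat \<Rightarrow> int) \<Rightarrow> real" where
  "gibbs V E \<gamma> \<sigma> = \<gamma> ^ mono_edges E \<sigma> / ising_Z V E \<gamma>"

definition chi_div :: "nat \<Rightarrow> ('s \<Rightarrow> real) \<Rightarrow> ('s \<Rightarrow> real) \<Rightarrow> 's set \<Rightarrow> real" where
  "chi_div \<alpha> \<nu> \<mu> \<Omega> = (\<Sum>\<sigma>\<in>\<Omega>. \<mu> \<sigma> * (1/2) * \<bar>\<nu> \<sigma> / \<mu> \<sigma> - 1\<bar> ^ \<alpha>)"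

end

(*
  Write r = \<beta>\<nu>/\<beta>\<mu> < 1 and m(\<sigma>) for the number of monochromatic edges. After rescaling, the
  quantity to be estimated is Q = 1/2 \<Sum>\<^sub>\<sigma> \<beta>\<mu>^m(\<sigma>) |r^m(\<sigma>) - t|^\<alpha> with
  t = Z(G,\<beta>\<nu>)/Z(G,\<beta>\<mu>), and \<beta>\<mu>^m (r^m)^\<alpha> = \<beta>^m.

  Upper bound: |x - t|^\<alpha> \<le> x^\<alpha> + t^\<alpha>, and since t is the \<mu>-mean of r^m, Jensen gives
  t^\<alpha> \<le> Z(G,\<beta>)/Z(G,\<beta>\<mu>); hence Q \<le> Z(G,\<beta>).

  Lower bound: the powers r^n are geometrically spread, so |r^n - t| \<ge> \<delta> r^n with
  \<delta> = (1-r)/(1+r) for every n except at most one value x. Hence 2Q \<ge> \<delta>^\<alpha> times the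
  \<beta>-weight of {m \<noteq> x}. The level set {m = x} itself carries at most a bounded multiple of
  that weight: for an edge uv, flipping u, v or both moves every configuration off the level
  set, and each of these moves changes m by at most 2\<Delta>.

  The hypotheses \<beta>\<nu> \<ge> (\<Delta>-2)/\<Delta> > \<beta> of the theorem are only used through \<beta>\<nu> > 0 and \<beta> < 1.
*)
theory Submission
  imports Defs "HOL-Analysis.Convex"
begin

lemma convex_on_power_nonneg: "convex_on {0::real..} (\<lambda>x. x ^ n)"
  by (cases "even n") (auto intro: convex_on_subset[OF convex_power_even] convex_power_odd)

lemma weighted_mean_power_le:
  fixes p x :: "'s \<Rightarrow> real"
  assumes "finite S" "sum p S = 1" "\<And>i. i \<in> S \<Longrightarrow> 0 \<le> p i" "\<And>i. i \<in> S \<Longrightarrow> 0 \<le> x i"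
  shows "(\<Sum>i\<in>S. p i * x i) ^ n \<le> (\<Sum>i\<in>S. p i * x i ^ n)"
proof -
  have "S \<noteq> {}" using assms(2) by auto
  then show ?thesis
    using convex_on_sum[OF assms(1) _ convex_on_power_nonneg assms(2,3), of x n] assms(4) by simp
qed

lemma abs_diff_power_le:
  fixes x y :: real
  assumes "0 \<le> x" "0 \<le> y"
  shows "\<bar>x - y\<bar> ^ n \<le> x ^ n + y ^ n"
proof -
  have "\<bar>x - y\<bar> ^ n \<le> max x y ^ n" using assms by (intro power_mono) auto
  also have "\<dots> \<le> x ^ n + y ^ n" using assms by (simp add: max_def)
  finally show ?thesis .
qed

lemma weighted_central_moment_le:
  fixes q \<rho> :: "'s \<Rightarrow> real"
  assumes S: "finite S" "sum q S > 0"
    and nonneg: "\<And>\<sigma>. \<sigma> \<in> S \<Longrightarrow> 0 \<le> q \<sigma>" "\<And>\<sigma>. \<sigma> \<in> S \<Longrightarrow> 0 \<le> \<rho> \<sigma>"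
  defines "t \<equiv> (\<Sum>\<sigma>\<in>S. q \<sigma> * \<rho> \<sigma>) / sum q S"
  shows "(\<Sum>\<sigma>\<in>S. q \<sigma> * \<bar>\<rho> \<sigma> - t\<bar> ^ n) \<le> 2 * (\<Sum>\<sigma>\<in>S. q \<sigma> * \<rho> \<sigma> ^ n)"
proof -
  have "t \<ge> 0" unfolding t_def using S nonneg by (intro divide_nonneg_pos sum_nonneg) auto
  have t_eq: "t = (\<Sum>\<sigma>\<in>S. q \<sigma> / sum q S * \<rho> \<sigma>)"
    unfolding t_def sum_divide_distrib by simp
  have "t ^ n \<le> (\<Sum>\<sigma>\<in>S. q \<sigma> / sum q S * \<rho> \<sigma> ^ n)"
    unfolding t_eq using S nonneg
    by (intro weighted_mean_power_le) (simp_all flip: sum_divide_distrib)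
  then have jensen: "t ^ n * sum q S \<le> (\<Sum>\<sigma>\<in>S. q \<sigma> * \<rho> \<sigma> ^ n)"
    using S by (simp add: sum_divide_distrib[symmetric] pos_le_divide_eq)
  have "(\<Sum>\<sigma>\<in>S. q \<sigma> * \<bar>\<rho> \<sigma> - t\<bar> ^ n) \<le> (\<Sum>\<sigma>\<in>S. q \<sigma> * (\<rho> \<sigma> ^ n + t ^ n))"
    using nonneg \<open>t \<ge> 0\<close> by (intro sum_mono mult_left_mono abs_diff_power_le) auto
  also have "\<dots> = (\<Sum>\<sigma>\<in>S. q \<sigma> * \<rho> \<sigma> ^ n) + sum q S * t ^ n"
    by (simp add: distrib_left sum.distrib sum_distrib_right)
  finally show ?thesis using jensen by (simp add: mult.commute)
qed

lemma powers_relatively_far_except_one: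
  fixes r t :: real
  assumes "0 < r" "r < 1"
  shows "\<exists>x::nat. \<forall>n. n \<noteq> x \<longrightarrow> (1 - r) / (1 + r) * r ^ n \<le> \<bar>r ^ n - t\<bar>"
proof -
  define \<delta> where "\<delta> = (1 - r) / (1 + r)"
  \<comment> \<open>\<open>(1 + \<delta>) r = 1 - \<delta>\<close>: the open intervals \<open>((1 - \<delta>) r^n, (1 + \<delta>) r^n)\<close> are pairwise disjoint.\<close>
  have \<delta>: "(1 + \<delta>) * r = 1 - \<delta>" "0 \<le> \<delta>"
    unfolding \<delta>_def using assms by (auto simp: field_simps)
  have not_both_close: "\<not> (\<bar>r ^ i - t\<bar> < \<delta> * r ^ i \<and> \<bar>r ^ j - t\<bar> < \<delta> * r ^ j)" if "i < j" for i j
  proof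
    assume close: "\<bar>r ^ i - t\<bar> < \<delta> * r ^ i \<and> \<bar>r ^ j - t\<bar> < \<delta> * r ^ j"
    have "r ^ j \<le> r * r ^ i"
      using power_decreasing[of "Suc i" j r] that assms by simp
    then have "(1 + \<delta>) * r ^ j \<le> (1 - \<delta>) * r ^ i"
      using mult_left_mono[of "r ^ j" "r * r ^ i" "1 + \<delta>"] \<delta> by (simp add: mult.assoc[symmetric])
    then show False using close by (auto simp: abs_less_iff algebra_simps)
  qed
  show ?thesis
  proof (cases "\<exists>x. \<bar>r ^ x - t\<bar> < \<delta> * r ^ x")
    case True
    then obtain x where "\<bar>r ^ x - t\<bar> < \<delta> * r ^ x" by blast
    then have "\<delta> * r ^ n \<le> \<bar>r ^ n - t\<bar>" if "n \<noteq> x" for n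
      using not_both_close[of n x] not_both_close[of x n] that by (cases "n < x") auto
    then show ?thesis unfolding \<delta>_def by blast
  next
    case False
    then show ?thesis unfolding \<delta>_def by (auto simp: not_less)
  qed
qed

lemma weighted_moment_ge_off_level:
  fixes q :: "'s \<Rightarrow> real" and k :: "'s \<Rightarrow> nat" and r t :: real
  assumes "0 < r" "r < 1" "finite S" "\<And>\<sigma>. \<sigma> \<in> S \<Longrightarrow> 0 \<le> q \<sigma>"
  shows "\<exists>x. ((1 - r) / (1 + r)) ^ n * (\<Sum>\<sigma>\<in>{\<sigma>\<in>S. k \<sigma> \<noteq> x}. q \<sigma> * (r ^ k \<sigma>) ^ n)
           \<le> (\<Sum>\<sigma>\<in>S. q \<sigma> * \<bar>r ^ k \<sigma> - t\<bar> ^ n)"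
proof -
  define \<delta> where "\<delta> = (1 - r) / (1 + r)"
  obtain x where far: "\<And>j. j \<noteq> x \<Longrightarrow> \<delta> * r ^ j \<le> \<bar>r ^ j - t\<bar>"
    using powers_relatively_far_except_one[OF assms(1,2)] unfolding \<delta>_def by blast
  have "\<delta> \<ge> 0" unfolding \<delta>_def using assms by simp
  have "\<delta> ^ n * (\<Sum>\<sigma>\<in>{\<sigma>\<in>S. k \<sigma> \<noteq> x}. q \<sigma> * (r ^ k \<sigma>) ^ n)
      = (\<Sum>\<sigma>\<in>{\<sigma>\<in>S. k \<sigma> \<noteq> x}. q \<sigma> * (\<delta> * r ^ k \<sigma>) ^ n)"
    by (simp add: sum_distrib_left power_mult_distrib algebra_simps)
  also have "\<dots> \<le> (\<Sum>\<sigma>\<in>{\<sigma>\<in>S. k \<sigma> \<noteq> x}. q \<sigma> * \<bar>r ^ k \<sigma> - t\<bar> ^ n)"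
    using assms \<open>\<delta> \<ge> 0\<close> far by (intro sum_mono mult_left_mono power_mono) auto
  also have "\<dots> \<le> (\<Sum>\<sigma>\<in>S. q \<sigma> * \<bar>r ^ k \<sigma> - t\<bar> ^ n)"
    using assms by (intro sum_mono2) auto
  finally show ?thesis unfolding \<delta>_def by blast
qed

lemma mult_power_power_eq: "y ^ k * (x ^ k) ^ n = (x ^ n * y) ^ k" for x y :: "'a::comm_monoid_mult"
  by (simp add: power_mult_distrib mult.commute flip: power_mult)

lemma chi_div_rescaled:
  fixes p q :: "'s \<Rightarrow> real"
  assumes "0 < P" "0 < Z" "\<And>\<sigma>. \<sigma> \<in> S \<Longrightarrow> 0 < q \<sigma>" "1 \<le> \<alpha>"
  shows "chi_div \<alpha> (\<lambda>\<sigma>. p \<sigma> / P) (\<lambda>\<sigma>. q \<sigma> / Z) S * P ^ \<alpha> / Z ^ (\<alpha> - 1)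
       = 1 / 2 * (\<Sum>\<sigma>\<in>S. q \<sigma> * \<bar>p \<sigma> / q \<sigma> - P / Z\<bar> ^ \<alpha>)"
proof -
  have Z_pow: "Z ^ \<alpha> = Z * Z ^ (\<alpha> - 1)"
    using assms(4) by (simp flip: power_Suc)
  have summand: "q \<sigma> / Z * (1 / 2) * \<bar>p \<sigma> / P / (q \<sigma> / Z) - 1\<bar> ^ \<alpha> * P ^ \<alpha> / Z ^ (\<alpha> - 1)
      = 1 / 2 * (q \<sigma> * \<bar>p \<sigma> / q \<sigma> - P / Z\<bar> ^ \<alpha>)" if "\<sigma> \<in> S" for \<sigma>
  proof -
    have "p \<sigma> / P / (q \<sigma> / Z) - 1 = Z / P * (p \<sigma> / q \<sigma> - P / Z)"
      using assms(1,2) assms(3)[OF that] by (simp add: field_simps)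
    then have "\<bar>p \<sigma> / P / (q \<sigma> / Z) - 1\<bar> ^ \<alpha> * P ^ \<alpha> = Z ^ \<alpha> * \<bar>p \<sigma> / q \<sigma> - P / Z\<bar> ^ \<alpha>"
      using assms(1,2) by (simp add: abs_mult power_mult_distrib power_divide)
    then show ?thesis
      using assms(2) Z_pow by (simp add: field_simps)
  qed
  show ?thesis
    unfolding chi_div_def sum_distrib_left sum_distrib_right sum_divide_distrib
    using summand by (intro sum.cong) auto
qed

lemma sum_le_card_mult_sum_by_escaping_maps:
  fixes w :: "'a \<Rightarrow> real" and H :: "('a \<Rightarrow> 'a) set"
  assumes fin: "finite S" "finite H" and "A \<subseteq> S" and w: "\<And>\<sigma>. \<sigma> \<in> S \<Longrightarrow> 0 \<le> w \<sigma>"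
    and inj: "\<And>h. h \<in> H \<Longrightarrow> inj_on h A"
    and escape: "\<And>\<sigma>. \<sigma> \<in> A \<Longrightarrow> \<exists>h\<in>H. h \<sigma> \<in> S - A"
    and cost: "\<And>h \<sigma>. h \<in> H \<Longrightarrow> \<sigma> \<in> A \<Longrightarrow> c * w \<sigma> \<le> w (h \<sigma>)"
    and "0 \<le> c"
  shows "c * sum w A \<le> card H * sum w (S - A)"
proof -
  define B where "B h = {\<sigma>\<in>A. h \<sigma> \<in> S - A}" for h
  have finA: "finite A" using fin \<open>A \<subseteq> S\<close> finite_subset by blast
  have "sum w A \<le> (\<Sum>\<sigma>\<in>A. \<Sum>h\<in>H. of_bool (h \<sigma> \<in> S - A) * w \<sigma>)"
  proof (intro sum_mono)
    fix \<sigma> assume "\<sigma> \<in> A"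
    then obtain h where "h \<in> H" "h \<sigma> \<in> S - A" using escape by blast
    then have "w \<sigma> = (\<Sum>h\<in>{h}. of_bool (h \<sigma> \<in> S - A) * w \<sigma>)" by simp
    also have "\<dots> \<le> (\<Sum>h\<in>H. of_bool (h \<sigma> \<in> S - A) * w \<sigma>)"
      using \<open>h \<in> H\<close> \<open>\<sigma> \<in> A\<close> \<open>A \<subseteq> S\<close> fin w by (intro sum_mono2) auto
    finally show "w \<sigma> \<le> (\<Sum>h\<in>H. of_bool (h \<sigma> \<in> S - A) * w \<sigma>)" .
  qed
  also have "\<dots> = (\<Sum>h\<in>H. sum w (B h))"
    unfolding B_def using finA by (subst sum.swap) (simp add: Collect_conj_eq Int_commute)
  finally have "c * sum w A \<le> c * (\<Sum>h\<in>H. sum w (B h))"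
    using \<open>0 \<le> c\<close> by (rule mult_left_mono)
  also have "\<dots> = (\<Sum>h\<in>H. c * sum w (B h))"
    by (rule sum_distrib_left)
  also have "\<dots> \<le> (\<Sum>h\<in>H. sum w (S - A))"
  proof (intro sum_mono)
    fix h assume "h \<in> H"
    have inj_B: "inj_on h (B h)" using inj[OF \<open>h \<in> H\<close>] unfolding B_def by (rule inj_on_subset) auto
    have "c * sum w (B h) \<le> (\<Sum>\<sigma>\<in>B h. w (h \<sigma>))"
      unfolding sum_distrib_left B_def using cost[OF \<open>h \<in> H\<close>] by (intro sum_mono) auto
    also have "\<dots> = sum w (h ` B h)" by (simp add: sum.reindex[OF inj_B])
    also have "\<dots> \<le> sum w (S - A)"
      using fin w by (intro sum_mono2) (auto simp: B_def)
    finally show "c * sum w (B h) \<le> sum w (S - A)" .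
  qed
  finally show ?thesis by simp
qed

definition flip_spin :: "nat \<Rightarrow> (nat \<Rightarrow> int) \<Rightarrow> nat \<Rightarrow> int" where
  "flip_spin w \<sigma> = \<sigma>(w := - \<sigma> w)"

definition monochromatic :: "nat set \<Rightarrow> (nat \<Rightarrow> int) \<Rightarrow> bool" where
  "monochromatic e \<sigma> \<longleftrightarrow> (\<exists>u v. e = {u, v} \<and> \<sigma> u = \<sigma> v)"

lemma flip_spin_flip_spin [simp]: "flip_spin w (flip_spin w \<sigma>) = \<sigma>"
  by (auto simp: flip_spin_def)

lemma inj_flip_spin: "inj (flip_spin w)"
  by (metis flip_spin_flip_spin injI)

lemma flip_spin_in_spins: "w \<in> V \<Longrightarrow> \<sigma> \<in> spins V \<Longrightarrow> flip_spin w \<sigma> \<in> spins V"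
  unfolding spins_def flip_spin_def by (auto simp: PiE_iff extensional_def)

lemma monochromatic_cong: "(\<And>z. z \<in> e \<Longrightarrow> \<sigma> z = \<tau> z) \<Longrightarrow> monochromatic e \<sigma> = monochromatic e \<tau>"
  unfolding monochromatic_def by (metis insertCI)

lemma monochromatic_flip_spin_other: "w \<notin> e \<Longrightarrow> monochromatic e (flip_spin w \<sigma>) = monochromatic e \<sigma>"
  by (rule monochromatic_cong) (auto simp: flip_spin_def)

lemma monochromatic_doubleton: "u \<noteq> v \<Longrightarrow> monochromatic {u, v} \<sigma> \<longleftrightarrow> \<sigma> u = \<sigma> v"
  unfolding monochromatic_def by (auto simp: doubleton_eq_iff)

lemma mono_edges_eq_sum:
  "finite E \<Longrightarrow> real (mono_edges E \<sigma>) = (\<Sum>e\<in>E. of_bool (monochromatic e \<sigma>))"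
  unfolding mono_edges_def monochromatic_def by (simp add: Collect_conj_eq)

lemma mono_edges_flip_spin_le:
  assumes "finite E"
  shows "mono_edges E (flip_spin w \<sigma>) \<le> mono_edges E \<sigma> + card {e\<in>E. w \<in> e}"
proof -
  let ?I = "\<lambda>\<tau> e. of_bool (monochromatic e \<tau>) :: real"
  have "real (mono_edges E (flip_spin w \<sigma>)) - real (mono_edges E \<sigma>)
      = (\<Sum>e\<in>E. ?I (flip_spin w \<sigma>) e - ?I \<sigma> e)"
    unfolding mono_edges_eq_sum[OF assms] sum_subtractf ..
  also have "\<dots> = (\<Sum>e\<in>E. of_bool (w \<in> e) * (?I (flip_spin w \<sigma>) e - ?I \<sigma> e))"
    by (intro sum.cong refl) (auto simp: of_bool_def monochromatic_flip_spin_other)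
  also have "\<dots> \<le> (\<Sum>e\<in>E. of_bool (w \<in> e))"
    by (intro sum_mono) auto
  finally show ?thesis using assms by (simp add: Collect_conj_eq)
qed

text \<open>Only the edge \<open>{u, v}\<close> sees both flips, and it contributes \<open>\<plusminus>2\<close> to the second difference.\<close>
lemma mono_edges_second_difference_ne_0:
  assumes "finite E" "{u, v} \<in> E" "u \<noteq> v" and edges: "\<And>e. e \<in> E \<Longrightarrow> card e = 2"
    and spins: "\<sigma> u \<in> {-1, 1}" "\<sigma> v \<in> {-1, 1}"
  shows "real (mono_edges E (flip_spin u (flip_spin v \<sigma>))) + real (mono_edges E \<sigma>)
       - real (mono_edges E (flip_spin u \<sigma>)) - real (mono_edges E (flip_spin v \<sigma>)) \<noteq> 0"
proof -
  define d where "d e = of_bool (monochromatic e (flip_spin u (flip_spin v \<sigma>))) + of_bool (monochromatic e \<sigma>)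
    - of_bool (monochromatic e (flip_spin u \<sigma>)) - (of_bool (monochromatic e (flip_spin v \<sigma>)) :: real)" for e
  have d_other: "d e = 0" if "e \<in> E" "e \<noteq> {u, v}" for e
  proof -
    have "\<not> {u, v} \<subseteq> e"
      using that edges \<open>u \<noteq> v\<close> by (metis card.infinite card_2_iff card_subset_eq zero_neq_numeral)
    moreover have "monochromatic e (flip_spin u (flip_spin v \<sigma>)) = monochromatic e (flip_spin u \<sigma>)" if "v \<notin> e"
      using that \<open>u \<noteq> v\<close> by (intro monochromatic_cong) (auto simp: flip_spin_def)
    ultimately show ?thesis
      unfolding d_def by (auto simp: monochromatic_flip_spin_other)
  qed
  have "real (mono_edges E (flip_spin u (flip_spin v \<sigma>))) + real (mono_edges E \<sigma>)
       - real (mono_edges E (flip_spin u \<sigma>)) - real (mono_edges E (flip_spin v \<sigma>)) = sum d E"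
    unfolding mono_edges_eq_sum[OF assms(1)] d_def sum.distrib sum_subtractf ..
  also have "\<dots> = d {u, v}"
    using assms(1,2) d_other by (subst sum.mono_neutral_right[of E "{{u, v}}"]) auto
  also have "\<dots> \<noteq> 0"
    unfolding d_def using \<open>u \<noteq> v\<close> spins by (auto simp: monochromatic_doubleton flip_spin_def)
  finally show ?thesis .
qed

lemma finite_spins: "finite V \<Longrightarrow> finite (spins V)"
  unfolding spins_def by (simp add: finite_PiE)

lemma spins_nonempty: "spins V \<noteq> {}"
proof -
  have "restrict (\<lambda>_. 1) V \<in> spins V" unfolding spins_def by auto
  then show ?thesis by blast
qed

lemma ising_Z_pos: "finite V \<Longrightarrow> 0 < \<gamma> \<Longrightarrow> 0 < ising_Z V E \<gamma>"
  unfolding ising_Z_def using finite_spins spins_nonempty by (intro sum_pos) auto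

lemma regular_graph_has_edge:
  assumes "regular_graph \<Delta> V E" "V \<noteq> {}" "0 < \<Delta>"
  shows "\<exists>u v. {u, v} \<in> E"
proof -
  obtain w where "w \<in> V" using assms(2) by blast
  then have "card {e\<in>E. w \<in> e} \<noteq> 0" using assms(1,3) unfolding regular_graph_def by simp
  then obtain e where "e \<in> E" by fastforce
  then have "card e = 2" using assms(1) unfolding regular_graph_def simple_graph_def by blast
  then show ?thesis using \<open>e \<in> E\<close> by (metis card_2_iff)
qed

lemma ising_level_set_weight_le:
  fixes g :: real
  assumes graph: "simple_graph V E" and edge: "{u, v} \<in> E"
    and degree: "\<And>w. w \<in> V \<Longrightarrow> card {e\<in>E. w \<in> e} \<le> D" and g: "0 < g" "g \<le> 1"
  shows "g ^ (2 * D) * (\<Sum>\<sigma>\<in>{\<sigma>\<in>spins V. mono_edges E \<sigma> = x}. g ^ mono_edges E \<sigma>)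
      \<le> 3 * (\<Sum>\<sigma>\<in>{\<sigma>\<in>spins V. mono_edges E \<sigma> \<noteq> x}. g ^ mono_edges E \<sigma>)"
proof -
  let ?m = "mono_edges E" and ?w = "\<lambda>\<sigma>. g ^ mono_edges E \<sigma>"
  define A where "A = {\<sigma>\<in>spins V. ?m \<sigma> = x}"
  define H where "H = {flip_spin u, flip_spin v, flip_spin u \<circ> flip_spin v}"
  have "finite V" and edges: "\<And>e. e \<in> E \<Longrightarrow> card e = 2" "\<And>e. e \<in> E \<Longrightarrow> e \<subseteq> V"
    using graph unfolding simple_graph_def by auto
  then have "finite E" by (meson Pow_iff finite_Pow_iff finite_subset subsetI)
  have "u \<noteq> v" using edges(1)[OF edge] by auto
  have "u \<in> V" "v \<in> V" using edges(2)[OF edge] by auto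
  have flip_le: "?m (flip_spin w \<sigma>) \<le> ?m \<sigma> + D" if "w \<in> V" for w \<sigma>
    using mono_edges_flip_spin_le[OF \<open>finite E\<close>, of w \<sigma>] degree[OF that] by simp
  have card_H: "card H \<le> (3::real)" unfolding H_def by (simp add: card_insert_if)
  have "g ^ (2 * D) * sum ?w A \<le> card H * sum ?w (spins V - A)"
  proof (rule sum_le_card_mult_sum_by_escaping_maps)
    show "finite (spins V)" using \<open>finite V\<close> by (rule finite_spins)
    show "inj_on h A" if "h \<in> H" for h
      using that inj_flip_spin unfolding H_def by (auto intro: inj_on_subset[of _ UNIV] inj_compose)
    show "\<exists>h\<in>H. h \<sigma> \<in> spins V - A" if "\<sigma> \<in> A" for \<sigma>
    proof -
      have "\<sigma> u \<in> {-1, 1}" "\<sigma> v \<in> {-1, 1}"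
        using that \<open>u \<in> V\<close> \<open>v \<in> V\<close> unfolding A_def spins_def by auto
      from mono_edges_second_difference_ne_0[OF \<open>finite E\<close> edge \<open>u \<noteq> v\<close> edges(1) this]
      have "\<exists>h\<in>H. ?m (h \<sigma>) \<noteq> x" using that unfolding A_def H_def by auto
      moreover have "h \<sigma> \<in> spins V" if "h \<in> H" for h
        using that \<open>\<sigma> \<in> A\<close> \<open>u \<in> V\<close> \<open>v \<in> V\<close> unfolding A_def H_def by (auto simp: flip_spin_in_spins)
      ultimately show ?thesis unfolding A_def by blast
    qed
    show "g ^ (2 * D) * ?w \<sigma> \<le> ?w (h \<sigma>)" if "h \<in> H" for h \<sigma>
    proof -
      have "?m (h \<sigma>) \<le> ?m \<sigma> + 2 * D"
        using that flip_le[OF \<open>u \<in> V\<close>, of \<sigma>] flip_le[OF \<open>v \<in> V\<close>, of \<sigma>]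
          flip_le[OF \<open>u \<in> V\<close>, of "flip_spin v \<sigma>"] unfolding H_def by auto
      then have "g ^ (?m \<sigma> + 2 * D) \<le> ?w (h \<sigma>)" using g by (intro power_decreasing) auto
      then show ?thesis by (simp add: power_add mult.commute)
    qed
  qed (use g in \<open>auto simp: H_def A_def\<close>)
  also have "\<dots> \<le> 3 * sum ?w (spins V - A)"
    using card_H g by (intro mult_right_mono sum_nonneg) auto
  finally have "g ^ (2 * D) * sum ?w A \<le> 3 * sum ?w (spins V - A)" .
  moreover have "spins V - A = {\<sigma>\<in>spins V. ?m \<sigma> \<noteq> x}" unfolding A_def by blast
  ultimately show ?thesis unfolding A_def by simp
qed

lemma ising_chi_div_scaled_eq:
  fixes a b :: real
  assumes "finite V" "0 < a" "0 < b" "1 \<le> \<alpha>"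
  shows "chi_div \<alpha> (gibbs V E a) (gibbs V E b) (spins V) * ising_Z V E a ^ \<alpha> / ising_Z V E b ^ (\<alpha> - 1)
       = 1 / 2 * (\<Sum>\<sigma>\<in>spins V. b ^ mono_edges E \<sigma>
                    * \<bar>(a / b) ^ mono_edges E \<sigma> - ising_Z V E a / ising_Z V E b\<bar> ^ \<alpha>)"
proof -
  have "a ^ k / b ^ k = (a / b) ^ k" for k by (simp add: power_divide)
  then show ?thesis
    unfolding gibbs_def[abs_def]
    using chi_div_rescaled[OF ising_Z_pos[OF assms(1,2)] ising_Z_pos[OF assms(1,3)] _ assms(4),
        of "spins V" "\<lambda>\<sigma>. b ^ mono_edges E \<sigma>"] assms(3)
    by simp
qed

lemma ising_chi_div_le:
  fixes a b :: real
  assumes "finite V" "0 < a" "0 < b" "1 \<le> \<alpha>"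
  shows "chi_div \<alpha> (gibbs V E a) (gibbs V E b) (spins V) * ising_Z V E a ^ \<alpha> / ising_Z V E b ^ (\<alpha> - 1)
       \<le> ising_Z V E ((a / b) ^ \<alpha> * b)"
proof -
  let ?m = "mono_edges E"
  have "ising_Z V E a / ising_Z V E b
      = (\<Sum>\<sigma>\<in>spins V. b ^ ?m \<sigma> * (a / b) ^ ?m \<sigma>) / (\<Sum>\<sigma>\<in>spins V. b ^ ?m \<sigma>)"
    unfolding ising_Z_def using \<open>0 < b\<close> by (simp add: power_divide)
  moreover have "0 < (\<Sum>\<sigma>\<in>spins V. b ^ ?m \<sigma>)"
    using ising_Z_pos[OF assms(1,3)] unfolding ising_Z_def .
  ultimately have "(\<Sum>\<sigma>\<in>spins V. b ^ ?m \<sigma> * \<bar>(a / b) ^ ?m \<sigma> - ising_Z V E a / ising_Z V E b\<bar> ^ \<alpha>)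
      \<le> 2 * (\<Sum>\<sigma>\<in>spins V. b ^ ?m \<sigma> * ((a / b) ^ ?m \<sigma>) ^ \<alpha>)"
    using finite_spins[OF assms(1)] assms(2,3) by (simp add: weighted_central_moment_le)
  then have "1 / 2 * (\<Sum>\<sigma>\<in>spins V. b ^ ?m \<sigma> * \<bar>(a / b) ^ ?m \<sigma> - ising_Z V E a / ising_Z V E b\<bar> ^ \<alpha>)
      \<le> ising_Z V E ((a / b) ^ \<alpha> * b)"
    unfolding mult_power_power_eq ising_Z_def[of V E "(a / b) ^ \<alpha> * b"] by simp
  then show ?thesis
    unfolding ising_chi_div_scaled_eq[OF assms] .
qed

lemma ising_chi_div_ge:
  fixes a b :: real
  assumes graph: "regular_graph \<Delta> V E" "V \<noteq> {}" "0 < \<Delta>"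
    and "0 < a" "a < b" "1 \<le> \<alpha>"
    and g_def: "g = (a / b) ^ \<alpha> * b" and "g \<le> 1"
  defines "Q \<equiv> chi_div \<alpha> (gibbs V E a) (gibbs V E b) (spins V)
               * ising_Z V E a ^ \<alpha> / ising_Z V E b ^ (\<alpha> - 1)"
  shows "((1 - a / b) / (1 + a / b)) ^ \<alpha> * g ^ (2 * \<Delta>) * ising_Z V E g
       \<le> 2 * (g ^ (2 * \<Delta>) + 3) * Q"
proof -
  let ?m = "mono_edges E" and ?S = "spins V"
  define \<delta> where "\<delta> = (1 - a / b) / (1 + a / b)"
  define c where "c = g ^ (2 * \<Delta>)"
  have "0 < a / b" "a / b < 1" "0 < b" using \<open>0 < a\<close> \<open>a < b\<close> by auto
  then have "0 < g" "0 \<le> \<delta>" unfolding g_def \<delta>_def by auto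
  have "finite V" using graph unfolding regular_graph_def simple_graph_def by blast
  then have "finite ?S" by (rule finite_spins)
  obtain x where
    far: "\<delta> ^ \<alpha> * (\<Sum>\<sigma>\<in>{\<sigma>\<in>?S. ?m \<sigma> \<noteq> x}. g ^ ?m \<sigma>) \<le> 2 * Q"
    using weighted_moment_ge_off_level[OF \<open>0 < a / b\<close> \<open>a / b < 1\<close> \<open>finite ?S\<close>,
        of "\<lambda>\<sigma>. b ^ ?m \<sigma>" \<alpha> ?m "ising_Z V E a / ising_Z V E b"] \<open>0 < b\<close>
    unfolding Q_def ising_chi_div_scaled_eq[OF \<open>finite V\<close> \<open>0 < a\<close> \<open>0 < b\<close> \<open>1 \<le> \<alpha>\<close>]
      mult_power_power_eq g_def[symmetric] \<delta>_def
    by auto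
  let ?L = "\<Sum>\<sigma>\<in>{\<sigma>\<in>?S. ?m \<sigma> = x}. g ^ ?m \<sigma>" and ?R = "\<Sum>\<sigma>\<in>{\<sigma>\<in>?S. ?m \<sigma> \<noteq> x}. g ^ ?m \<sigma>"
  obtain u v where "{u, v} \<in> E" using regular_graph_has_edge[OF graph] by blast
  then have "c * ?L \<le> 3 * ?R"
    unfolding c_def using graph \<open>0 < g\<close> \<open>g \<le> 1\<close>
    by (intro ising_level_set_weight_le) (auto simp: regular_graph_def)
  moreover have "ising_Z V E g = ?L + ?R"
    unfolding ising_Z_def using \<open>finite ?S\<close>
    by (subst sum.union_disjoint[symmetric]) (auto intro: sum.cong)
  ultimately have "c * ising_Z V E g \<le> (c + 3) * ?R" by (simp add: algebra_simps)
  then have "\<delta> ^ \<alpha> * (c * ising_Z V E g) \<le> \<delta> ^ \<alpha> * ((c + 3) * ?R)"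
    using \<open>0 \<le> \<delta>\<close> by (intro mult_left_mono) auto
  then have "\<delta> ^ \<alpha> * c * ising_Z V E g \<le> (c + 3) * (\<delta> ^ \<alpha> * ?R)"
    by (simp only: ac_simps)
  also have "\<dots> \<le> (c + 3) * (2 * Q)"
    using far \<open>0 < g\<close> unfolding c_def by (intro mult_left_mono) auto
  finally show ?thesis unfolding \<delta>_def c_def by (simp only: ac_simps)
qed

lemma ising_chi_div_two_sided:
  fixes a b :: real
  assumes "0 < \<Delta>" "1 \<le> \<alpha>" "0 < a" "a < b" "(a / b) ^ \<alpha> * b \<le> 1"
  shows "\<exists>C>0. \<forall>V E. regular_graph \<Delta> V E \<and> V \<noteq> {} \<longrightarrow>
           (let g = (a / b) ^ \<alpha> * b;
                Q = chi_div \<alpha> (gibbs V E a) (gibbs V E b) (spins V)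
                    * ising_Z V E a ^ \<alpha> / ising_Z V E b ^ (\<alpha> - 1)
            in ising_Z V E g / C \<le> Q \<and> Q \<le> C * ising_Z V E g)"
proof -
  define g where "g = (a / b) ^ \<alpha> * b"
  define \<delta> where "\<delta> = (1 - a / b) / (1 + a / b)"
  define c where "c = g ^ (2 * \<Delta>)"
  define C where "C = 2 * (c + 3) / (\<delta> ^ \<alpha> * c)"
  have "0 < a / b" "a / b < 1" "0 < b" using assms(3,4) by auto
  then have "0 < g" "0 < \<delta>" "\<delta> < 1" unfolding g_def \<delta>_def by auto
  then have "0 < c" "0 < \<delta> ^ \<alpha> * c" "\<delta> ^ \<alpha> * c \<le> c"
    unfolding c_def by (auto intro: mult_left_le_one_le power_le_one)
  then have "0 < C" "1 \<le> C" unfolding C_def by (auto simp: le_divide_eq_1_pos)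
  show ?thesis
  proof (intro exI[of _ C] conjI allI impI \<open>0 < C\<close>)
    fix V E assume graph: "regular_graph \<Delta> V E \<and> V \<noteq> {}"
    then have "finite V" unfolding regular_graph_def simple_graph_def by blast
    let ?Q = "chi_div \<alpha> (gibbs V E a) (gibbs V E b) (spins V)
                * ising_Z V E a ^ \<alpha> / ising_Z V E b ^ (\<alpha> - 1)"
    have "\<delta> ^ \<alpha> * c * ising_Z V E g \<le> 2 * (c + 3) * ?Q"
      using ising_chi_div_ge[OF conjunct1[OF graph] conjunct2[OF graph] assms(1,3,4,2) g_def]
        assms(5) unfolding g_def[symmetric] \<delta>_def c_def by blast
    moreover have "ising_Z V E g / C = \<delta> ^ \<alpha> * c * ising_Z V E g / (2 * (c + 3))"
      unfolding C_def by (simp add: ac_simps)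
    moreover have "0 < 2 * (c + 3)" using \<open>0 < c\<close> by simp
    ultimately have "ising_Z V E g / C \<le> ?Q"
      by (simp add: pos_divide_le_eq mult.commute)
    moreover have "?Q \<le> C * ising_Z V E g"
    proof -
      have "?Q \<le> ising_Z V E g"
        unfolding g_def using \<open>finite V\<close> assms(3) \<open>0 < b\<close> assms(2) by (rule ising_chi_div_le)
      moreover have "0 \<le> ising_Z V E g"
        by (rule less_imp_le[OF ising_Z_pos[OF \<open>finite V\<close> \<open>0 < g\<close>]])
      ultimately show ?thesis using \<open>1 \<le> C\<close> mult_right_mono[of 1 C] by fastforce
    qed
    ultimately show "let g = (a / b) ^ \<alpha> * b; Q = ?Q in ising_Z V E g / C \<le> Q \<and> Q \<le> C * ising_Z V E g"
      unfolding Let_def g_def[symmetric] by blast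
  qed
qed

theorem lemma7p2:
  fixes \<alpha> \<Delta> :: nat and \<beta>\<nu> \<beta>\<mu> :: real
  assumes "\<alpha> \<ge> 2" and "\<Delta> \<ge> 3"
    and "\<beta>\<mu> > \<beta>\<nu>" and "\<beta>\<nu> \<ge> (real \<Delta> - 2) / real \<Delta>"
    and "(\<beta>\<nu> / \<beta>\<mu>) ^ \<alpha> * \<beta>\<mu> < (real \<Delta> - 2) / real \<Delta>"
  shows "\<exists>C>0. \<forall>V E. regular_graph \<Delta> V E \<and> V \<noteq> {} \<longrightarrow>
           (let \<beta> = (\<beta>\<nu> / \<beta>\<mu>) ^ \<alpha> * \<beta>\<mu>;
                Q = chi_div \<alpha> (gibbs V E \<beta>\<nu>) (gibbs V E \<beta>\<mu>) (spins V)
                    * ising_Z V E \<beta>\<nu> ^ \<alpha> / ising_Z V E \<beta>\<mu> ^ (\<alpha> - 1)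
            in ising_Z V E \<beta> / C \<le> Q \<and> Q \<le> C * ising_Z V E \<beta>)"
proof -
  have "0 < (real \<Delta> - 2) / real \<Delta>" "(real \<Delta> - 2) / real \<Delta> < 1"
    using \<open>\<Delta> \<ge> 3\<close> by auto
  then have "0 < \<beta>\<nu>" "(\<beta>\<nu> / \<beta>\<mu>) ^ \<alpha> * \<beta>\<mu> \<le> 1"
    using assms(4,5) by linarith+
  moreover have "0 < \<Delta>" "1 \<le> \<alpha>" using assms(1,2) by auto
  ultimately show ?thesis
    using ising_chi_div_two_sided \<open>\<beta>\<mu> > \<beta>\<nu>\<close> by blast
qed

end
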